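(* $\mathcal{R}_{MS}\subset\mathbb{C}_-=\{z\in\mathbb{C}:\Re(z)<0\}$. Equivalently, for every $z\in\mathbb{C}$ with $\Re(z)\ge0$, $\mathbb{E}\,\bigl|1+\frac{z}{1-z\tau_1}\bigr|^2\ge1$ (the expectation possibly being $+\infty$).
   Context: Let $\tau_1,\tau_2,\ldots$ be independent random variables uniformly distributed on $[0,1]$. Applying either of the randomized implicit RK2 schemes (S1) or (S2) with step $h>0$ to Dahlquist's test equation $z'(t)=\lambda z(t)$, $z(0)=1$, $\lambda\in\mathbb{C}$, gives, with $z=\lambda h$, $V^k=\prod_{j=1}^k\bigl(1+\frac{z}{1-z\tau_j}\bigr)$, $k\ge0$ (almost surely well defined). The mean-square stability region is $\mathcal{R}_{MS}=\{z\in\mathbb{C}: V^k\to0 \text{ in } L^2(\Omega)\text{ as } k\to\infty\}$; equivalently $\mathcal{R}_{MS}=\{z\in\mathbb{C}: \mathbb{E}\,|1+\frac{z}{1-z\tau_1}|^2<1\}$. *)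

theory Defs
  imports "HOL-Probability.Probability"
begin

text \<open>Amplification factor of one step of the randomized RK2 scheme applied to
  Dahlquist's test equation, for z = lambda h and random node tau.\<close>
definition amp :: "complex \<Rightarrow> real \<Rightarrow> complex" where
  "amp z t = 1 + z / (1 - z * complex_of_real t)"

definition second_moment :: "complex \<Rightarrow> ennreal" where
  "second_moment z = (\<integral>\<^sup>+ t. ennreal ((cmod (amp z t))\<^sup>2) \<partial>(uniform_measure lborel {0..1::real}))"

definition R_MS :: "complex set" where
  "R_MS = {z. second_moment z < 1}"

end

theory Submission
  imports Defs
begin

text \<open>Pair the node t with its reflection 1 - t. Since
  amp z t = (1 + z (1 - t)) / (1 - z t) and |1 - w| \<le> |1 + w| whenever Re w \<ge> 0,
  the numerator of amp z t dominates the denominator of amp z (1 - t) and vice versa,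
  so |amp z t|^2 + |amp z (1 - t)|^2 \<ge> v/u + u/v \<ge> 2, where u and v are the two
  squared denominators. The uniform
  distribution on [0,1] is invariant under t \<mapsto> 1 - t, hence averaging gives a second
  moment of at least 1 for every z with Re z \<ge> 0.\<close>

lemma norm_one_minus_le_norm_one_plus:
  fixes w :: complex
  assumes "Re w \<ge> 0"
  shows "cmod (1 - w) \<le> cmod (1 + w)"
proof -
  have "(cmod (1 - w))\<^sup>2 \<le> (cmod (1 + w))\<^sup>2"
    using assms unfolding cmod_power2 by (simp add: power2_eq_square algebra_simps)
  then show ?thesis by (simp add: power2_le_iff_abs_le)
qed

lemma amp_eq_quotient:
  assumes "1 - z * complex_of_real t \<noteq> 0"
  shows "amp z t = (1 + z * complex_of_real (1 - t)) / (1 - z * complex_of_real t)"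
  using assms unfolding amp_def by (simp add: field_simps)

lemma divide_add_divide_ge_2:
  fixes a b u v :: real
  assumes "0 < u" "0 < v" "v \<le> a" "u \<le> b"
  shows "2 \<le> a / u + b / v"
proof -
  have "2 * (u * v) \<le> v * v + u * u"
    using sum_squares_bound[of u v] by (simp add: power2_eq_square algebra_simps)
  then have "2 \<le> v / u + u / v"
    using assms(1,2) by (simp add: field_simps)
  also have "\<dots> \<le> a / u + b / v"
    using assms by (simp add: add_mono divide_right_mono)
  finally show ?thesis .
qed

lemma amp_reflect_sq_sum_ge_2:
  fixes z :: complex and t :: real
  assumes "Re z \<ge> 0" "0 \<le> t" "t \<le> 1"
    and "1 - z * complex_of_real t \<noteq> 0" "1 - z * complex_of_real (1 - t) \<noteq> 0"
  shows "2 \<le> (cmod (amp z t))\<^sup>2 + (cmod (amp z (1 - t)))\<^sup>2"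
proof -
  have le: "(cmod (1 - z * complex_of_real s))\<^sup>2 \<le> (cmod (1 + z * complex_of_real s))\<^sup>2"
    if "0 \<le> s" for s
    using norm_one_minus_le_norm_one_plus[of "z * complex_of_real s"] assms(1) that
    by (simp add: power_mono)
  have "2 \<le> (cmod (1 + z * complex_of_real (1 - t)))\<^sup>2 / (cmod (1 - z * complex_of_real t))\<^sup>2
      + (cmod (1 + z * complex_of_real t))\<^sup>2 / (cmod (1 - z * complex_of_real (1 - t)))\<^sup>2"
    using assms(2-5) by (intro divide_add_divide_ge_2 le) auto
  then show ?thesis
    using amp_eq_quotient[OF assms(4)] amp_eq_quotient[of z "1 - t", OF assms(5)]
    by (simp add: norm_divide power_divide del: of_real_diff)
qed

lemma finite_roots_one_minus_mult:
  "finite {t :: real. 1 - z * complex_of_real t = 0}"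
proof (rule finite_subset)
  show "{t :: real. 1 - z * complex_of_real t = 0} \<subseteq> {Re (1 / z)}"
  proof safe
    fix t :: real
    assume "1 - z * complex_of_real t = 0"
    then have "complex_of_real t = 1 / z"
      by (auto simp: eq_divide_eq mult.commute)
    then show "t = Re (1 / z)"
      by (metis Re_complex_of_real)
  qed
qed simp

lemma nn_integral_uniform_measure_reflect:
  fixes a b :: real
  assumes [measurable]: "f \<in> borel_measurable borel"
  shows "(\<integral>\<^sup>+ t. f (a + b - t) \<partial>uniform_measure lborel {a..b})
    = (\<integral>\<^sup>+ t. f t \<partial>uniform_measure lborel {a..b})"
proof -
  have "(\<integral>\<^sup>+ t. f t * indicator {a..b} t \<partial>lborel)
      = (\<integral>\<^sup>+ t. f (a + b + (-1) * t) * indicator {a..b} (a + b + (-1) * t) \<partial>lborel)"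
    by (subst nn_integral_real_affine[where c = "-1" and t = "a + b"]) auto
  also have "\<dots> = (\<integral>\<^sup>+ t. f (a + b - t) * indicator {a..b} t \<partial>lborel)"
    by (intro nn_integral_cong) (auto simp: indicator_def)
  finally show ?thesis
    by (simp add: nn_integral_uniform_measure)
qed

lemma nn_integral_uniform_measure_ge_of_reflect_sum:
  fixes a b :: real and c :: ennreal
  assumes "a < b" and [measurable]: "g \<in> borel_measurable borel"
    and "AE t in lborel. t \<in> {a..b} \<longrightarrow> 2 * c \<le> g t + g (a + b - t)"
  shows "c \<le> (\<integral>\<^sup>+ t. g t \<partial>uniform_measure lborel {a..b})"
proof -
  let ?M = "uniform_measure lborel {a..b}"
  interpret prob_space ?M
    using assms(1) by (intro prob_space_uniform_measure) auto
  have "2 * c = (\<integral>\<^sup>+ t. 2 * c \<partial>?M)"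
    using emeasure_space_1 by (simp only: nn_integral_const mult_1_right)
  also have "\<dots> \<le> (\<integral>\<^sup>+ t. g t + g (a + b - t) \<partial>?M)"
    using assms(3) by (intro nn_integral_mono_AE AE_uniform_measureI) auto
  also have "\<dots> = 2 * (\<integral>\<^sup>+ t. g t \<partial>?M)"
    by (simp add: nn_integral_add nn_integral_uniform_measure_reflect mult_2)
  finally show ?thesis
    by (simp add: ennreal_mult_le_mult_iff)
qed

lemma second_moment_ge_1:
  assumes "Re z \<ge> 0"
  shows "1 \<le> second_moment z"
  unfolding second_moment_def
proof (rule nn_integral_uniform_measure_ge_of_reflect_sum)
  let ?S = "{t :: real. 1 - z * complex_of_real t = 0}"
  show "(\<lambda>t. ennreal ((cmod (amp z t))\<^sup>2)) \<in> borel_measurable borel"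
    unfolding amp_def by measurable
  have "?S \<union> (\<lambda>t. 1 - t) ` ?S \<in> null_sets lborel"
    by (intro finite_imp_null_set_lborel) (use finite_roots_one_minus_mult[of z] in simp)
  then show "AE t in lborel. t \<in> {0..1} \<longrightarrow>
      2 * 1 \<le> ennreal ((cmod (amp z t))\<^sup>2) + ennreal ((cmod (amp z (0 + 1 - t)))\<^sup>2)"
  proof (rule AE_not_in[THEN eventually_mono], intro impI)
    fix t :: real
    assume "t \<notin> ?S \<union> (\<lambda>t. 1 - t) ` ?S" and t: "t \<in> {0..1}"
    then have "1 - z * complex_of_real t \<noteq> 0" "1 - z * complex_of_real (1 - t) \<noteq> 0"
      by (auto intro!: image_eqI[where x = "1 - t"] simp del: of_real_diff)
    then have "2 \<le> (cmod (amp z t))\<^sup>2 + (cmod (amp z (1 - t)))\<^sup>2"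
      using amp_reflect_sq_sum_ge_2[OF assms] t by simp
    then show "2 * 1 \<le> ennreal ((cmod (amp z t))\<^sup>2) + ennreal ((cmod (amp z (0 + 1 - t)))\<^sup>2)"
      by (simp add: ennreal_plus[symmetric] del: ennreal_plus)
  qed
qed simp

theorem fact2:
  shows "R_MS \<subseteq> {z. Re z < 0}"
  using second_moment_ge_1 by (force simp: R_MS_def not_less[symmetric])

end
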